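(* Let $S=\{(\lambda,\mu,\nu)\in(\Lambda_4)^3 : c_{\lambda\mu}^\nu\neq 0,\ \lambda_4=\mu_4=0,\ \lambda_2=\lambda_3,\ \mu_2=\mu_3\}$. The convex cone generated by $S$ has exactly 8 extremal rays, generated by the triples $(\lambda,\mu,\nu)$: $((1,0,0,0),(0,0,0,0),(1,0,0,0))$, $((0,0,0,0),(1,0,0,0),(1,0,0,0))$, $((1,1,1,0),(0,0,0,0),(1,1,1,0))$, $((0,0,0,0),(1,1,1,0),(1,1,1,0))$, $((1,0,0,0),(1,0,0,0),(1,1,0,0))$, $((1,0,0,0),(1,1,1,0),(1,1,1,1))$, $((1,1,1,0),(1,0,0,0),(1,1,1,1))$, $((1,1,1,0),(1,1,1,0),(2,2,1,1))$. Each of these triples satisfies $c_{\lambda\mu}^\nu=1$, and the Hilbert basis of the semigroup $S$ consists of these 8 triples.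
   Context: $\Lambda_4$ is the set of non-increasing sequences of 4 nonnegative integers. $c_{\lambda\mu}^\nu$ are the Littlewood–Richardson coefficients of $\mathrm{GL}_4(\mathbb{C})$, defined by $V_4(\lambda)\otimes V_4(\mu)=\bigoplus_\nu c_{\lambda\mu}^\nu V_4(\nu)$. *)

theory Defs
  imports "HOL-Analysis.Analysis"
begin

text \<open>Partitions with at most 4 parts: non-increasing lists of 4 naturals.
  Index i (0-based) stands for the (i+1)-th part.\<close>
definition Lambda4 :: "nat list set" where
  "Lambda4 = {l. length l = 4 \<and> sorted_wrt (\<ge>) l}"

definition skew_cell :: "nat list \<Rightarrow> nat list \<Rightarrow> nat \<Rightarrow> nat \<Rightarrow> bool" where
  "skew_cell lam nu i j \<longleftrightarrow> i < 4 \<and> lam ! i \<le> j \<and> j < nu ! i"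

definition reading_word :: "nat list \<Rightarrow> nat list \<Rightarrow> (nat \<Rightarrow> nat \<Rightarrow> nat) \<Rightarrow> nat list" where
  "reading_word lam nu T = concat (map (\<lambda>i. map (\<lambda>j. T i j) (rev [lam ! i..<nu ! i])) [0..<4])"

text \<open>Littlewood-Richardson tableaux of shape nu/lambda and content mu
  (entry k stands for the letter k+1).\<close>
definition LR_tableaux :: "nat list \<Rightarrow> nat list \<Rightarrow> nat list \<Rightarrow> (nat \<Rightarrow> nat \<Rightarrow> nat) set" where
  "LR_tableaux lam mu nu = {T.
     (\<forall>i j. \<not> skew_cell lam nu i j \<longrightarrow> T i j = 0) \<and>
     (\<forall>i j. skew_cell lam nu i j \<longrightarrow> T i j < 4) \<and>
     (\<forall>i j. skew_cell lam nu i j \<and> skew_cell lam nu i (Suc j) \<longrightarrow> T i j \<le> T i (Suc j)) \<and>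
     (\<forall>i j. skew_cell lam nu i j \<and> skew_cell lam nu (Suc i) j \<longrightarrow> T i j < T (Suc i) j) \<and>
     (\<forall>k<4. count_list (reading_word lam nu T) k = mu ! k) \<and>
     (\<forall>p \<le> length (reading_word lam nu T). \<forall>k.
        count_list (take p (reading_word lam nu T)) (Suc k)
          \<le> count_list (take p (reading_word lam nu T)) k)}"

definition LR_coeff :: "nat list \<Rightarrow> nat list \<Rightarrow> nat list \<Rightarrow> nat" where
  "LR_coeff lam mu nu =
     (if lam \<in> Lambda4 \<and> mu \<in> Lambda4 \<and> nu \<in> Lambda4 \<and> (\<forall>i<4. lam ! i \<le> nu ! i)
      then card (LR_tableaux lam mu nu) else 0)"

type_synonym triple = "nat list \<times> nat list \<times> nat list"

definition S_set :: "triple set" where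
  "S_set = {(lam, mu, nu). lam \<in> Lambda4 \<and> mu \<in> Lambda4 \<and> nu \<in> Lambda4 \<and>
      LR_coeff lam mu nu \<noteq> 0 \<and> lam ! 3 = 0 \<and> mu ! 3 = 0 \<and>
      lam ! 1 = lam ! 2 \<and> mu ! 1 = mu ! 2}"

definition vec4 :: "nat list \<Rightarrow> real \<times> real \<times> real \<times> real" where
  "vec4 l = (real (l ! 0), real (l ! 1), real (l ! 2), real (l ! 3))"

definition emb :: "triple \<Rightarrow> (real \<times> real \<times> real \<times> real) \<times> (real \<times> real \<times> real \<times> real) \<times> (real \<times> real \<times> real \<times> real)" where
  "emb t = (case t of (lam, mu, nu) \<Rightarrow> (vec4 lam, vec4 mu, vec4 nu))"

definition extremal_ray :: "'a::real_vector set \<Rightarrow> 'a set \<Rightarrow> bool" where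
  "extremal_ray C R \<longleftrightarrow> R face_of C \<and> (\<exists>v. v \<noteq> 0 \<and> R = {t *\<^sub>R v | t. 0 \<le> t})"

definition ray :: "'a::real_vector \<Rightarrow> 'a set" where
  "ray v = {t *\<^sub>R v | t. 0 \<le> t}"

definition tadd :: "triple \<Rightarrow> triple \<Rightarrow> triple" where
  "tadd s t = (case s of (a, b, c) \<Rightarrow> case t of (a', b', c') \<Rightarrow>
      (map2 (+) a a', map2 (+) b b', map2 (+) c c'))"

definition tzero :: triple where
  "tzero = ([0,0,0,0], [0,0,0,0], [0,0,0,0])"

text \<open>Hilbert basis of a (pointed) affine semigroup M: its irreducible elements,
  i.e. nonzero elements not a sum of two nonzero elements of M.\<close>
definition hilbert_basis :: "triple set \<Rightarrow> triple set" where
  "hilbert_basis M = {s \<in> M. s \<noteq> tzero \<and>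
      \<not> (\<exists>a\<in>M. \<exists>b\<in>M. a \<noteq> tzero \<and> b \<noteq> tzero \<and> s = tadd a b)}"

definition gens :: "triple list" where
  "gens = [([1,0,0,0],[0,0,0,0],[1,0,0,0]),
           ([0,0,0,0],[1,0,0,0],[1,0,0,0]),
           ([1,1,1,0],[0,0,0,0],[1,1,1,0]),
           ([0,0,0,0],[1,1,1,0],[1,1,1,0]),
           ([1,0,0,0],[1,0,0,0],[1,1,0,0]),
           ([1,0,0,0],[1,1,1,0],[1,1,1,1]),
           ([1,1,1,0],[1,0,0,0],[1,1,1,1]),
           ([1,1,1,0],[1,1,1,0],[2,2,1,1])]"

end

(* Every LR tableau of shape nu/(a,b,b,0) and content (c,d,d,0) uses only the letters 1, 2, 3 and
   is determined by how many times each letter occurs in each row.  These counts are exactly the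
   lattice points of a rational polyhedral cone, and S is the image of that cone under a linear
   map.  A greedy case analysis peels one of the eight listed triples off every nonzero element
   of S, so they generate S as a semigroup and span its cone.  For each of them a linear
   functional is nonnegative on all eight and vanishes only on that one: this exposes it as an
   extremal ray and shows that it cannot be split into two nonzero elements of S. *)

theory Submission
  imports Defs
begin

section \<open>Row fillings and lattice words\<close>

definition row_filling :: "nat \<Rightarrow> nat \<Rightarrow> nat \<Rightarrow> nat \<Rightarrow> nat" where
  "row_filling l z y j = (if j < l + z then 0 else if j < l + z + y then 1 else 2)"

lemma row_filling_mono: "j \<le> j' \<Longrightarrow> row_filling l z y j \<le> row_filling l z y j'"
  by (simp add: row_filling_def)

lemma map_upt_eq_replicate:
  assumes "\<And>j. m \<le> j \<Longrightarrow> j < n \<Longrightarrow> f j = c"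
  shows "map f [m..<n] = replicate (n - m) c"
proof -
  have "map f [m..<n] = map (\<lambda>_. c) [m..<n]"
    using assms by (intro map_cong) auto
  then show ?thesis
    by (simp add: map_replicate_const)
qed

lemma rev_map_row_filling:
  "map (row_filling l z y) (rev [l..<l + z + y + t]) =
    replicate t 2 @ replicate y 1 @ replicate z 0"
proof -
  have "[l..<l + z + y + t] = [l..<l + z] @ [l + z..<l + z + y] @ [l + z + y..<l + z + y + t]"
    by (metis add.assoc le_add1 upt_add_eq_append)
  moreover have "map (row_filling l z y) [l..<l + z] = replicate z 0"
    by (subst map_upt_eq_replicate[of _ _ _ 0]) (auto simp: row_filling_def)
  moreover have "map (row_filling l z y) [l + z..<l + z + y] = replicate y 1"
    by (subst map_upt_eq_replicate[of _ _ _ 1]) (auto simp: row_filling_def)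
  moreover have "map (row_filling l z y) [l + z + y..<l + z + y + t] = replicate t 2"
    by (subst map_upt_eq_replicate[of _ _ _ 2]) (auto simp: row_filling_def)
  ultimately show ?thesis
    by (simp add: rev_map[symmetric])
qed

lemma weakly_increasing_eq_row_filling:
  assumes "l \<le> u"
    and mono: "\<And>j. l \<le> j \<Longrightarrow> Suc j < u \<Longrightarrow> f j \<le> f (Suc j)"
    and le2: "\<And>j. l \<le> j \<Longrightarrow> j < u \<Longrightarrow> f j \<le> 2"
  shows "\<exists>z y. l + z + y \<le> u \<and> (\<forall>j. l \<le> j \<longrightarrow> j < u \<longrightarrow> f j = row_filling l z y j)"
  using \<open>l \<le> u\<close>
proof (induction u rule: dec_induct)
  case base
  show ?case by auto
next
  case (step n)
  then obtain z y where zy: "l + z + y \<le> n"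
    and f: "\<forall>j. l \<le> j \<longrightarrow> j < n \<longrightarrow> f j = row_filling l z y j"
    by blast
  have prev: "row_filling l z y (n - 1) \<le> f n" if "l < n"
    using mono[of "n - 1"] f that step.hyps by simp
  consider "f n = 0" | "f n = 1" | "f n = 2"
    using le2[of n] step.hyps by linarith
  then show ?case
  proof cases
    case 1
    then have "z = n - l" "y = 0"
      using zy prev by (fastforce simp: row_filling_def split: if_splits)+
    then show ?thesis
      using f 1 zy by (intro exI[of _ "Suc z"] exI[of _ 0]) (auto simp: row_filling_def less_Suc_eq)
  next
    case 2
    then have "l + z + y = n"
      using zy prev by (fastforce simp: row_filling_def split: if_splits)
    then show ?thesis
      using f 2 by (intro exI[of _ z] exI[of _ "Suc y"]) (auto simp: row_filling_def less_Suc_eq)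
  next
    case 3
    then show ?thesis
      using f zy by (intro exI[of _ z] exI[of _ y]) (auto simp: row_filling_def less_Suc_eq)
  qed
qed

lemma column_strict_row_filling_iff:
  assumes "l' \<le> l" "l + z + y \<le> u" "l' + z' + y' \<le> u'" "u' \<le> u"
  shows "(\<forall>j. l \<le> j \<longrightarrow> j < u' \<longrightarrow> row_filling l z y j < row_filling l' z' y' j) \<longleftrightarrow>
    l' + z' \<le> l \<and> l' + z' + y' \<le> l + z \<and> u' \<le> l + z + y"
    (is "?strict \<longleftrightarrow> _")
proof
  assume ?strict
  then have strict: "row_filling l z y j < row_filling l' z' y' j" if "l \<le> j" "j < u'" for j
    using that by blast
  have "l' + z' \<le> l"
  proof (rule ccontr)
    assume "\<not> l' + z' \<le> l"
    then show False
      using strict[of l] assms by (simp add: row_filling_def)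
  qed
  moreover have "l' + z' + y' \<le> l + z"
  proof (rule ccontr)
    assume gt: "\<not> l' + z' + y' \<le> l + z"
    have "row_filling l z y (l' + z' + y' - 1) < row_filling l' z' y' (l' + z' + y' - 1)"
      using gt assms by (intro strict) linarith+
    then show False
      using gt by (simp add: row_filling_def split: if_splits)
  qed
  moreover have "u' \<le> l + z + y"
  proof (rule ccontr)
    assume gt: "\<not> u' \<le> l + z + y"
    have "row_filling l z y (u' - 1) < row_filling l' z' y' (u' - 1)"
      using gt assms by (intro strict) linarith+
    then show False
      using gt by (simp add: row_filling_def split: if_splits)
  qed
  ultimately show "l' + z' \<le> l \<and> l' + z' + y' \<le> l + z \<and> u' \<le> l + z + y"
    by blast
qed (auto simp: row_filling_def)

lemma count_list_replicate: "count_list (replicate m x) y = (if x = y then m else 0)"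
  by (induction m) auto

definition lattice_word :: "nat list \<Rightarrow> bool" where
  "lattice_word w \<longleftrightarrow> (\<forall>p \<le> length w. \<forall>k. count_list (take p w) (Suc k) \<le> count_list (take p w) k)"

lemma lattice_word_Nil [simp]: "lattice_word []"
  by (simp add: lattice_word_def)

lemma lattice_word_append_replicate:
  "lattice_word (w @ replicate m x) \<longleftrightarrow>
     lattice_word w \<and> (\<forall>k. x = Suc k \<longrightarrow> count_list w x + m \<le> count_list w k)"
proof
  assume lat: "lattice_word (w @ replicate m x)"
  have "lattice_word w"
    unfolding lattice_word_def
  proof (intro allI impI)
    fix p k
    assume "p \<le> length w"
    then show "count_list (take p w) (Suc k) \<le> count_list (take p w) k"
      using lat[unfolded lattice_word_def, rule_format, of p k] by simp
  qed
  moreover have "count_list w x + m \<le> count_list w k" if "x = Suc k" for k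
    using lat[unfolded lattice_word_def, rule_format, of "length (w @ replicate m x)" k] that
    by (simp add: count_list_replicate)
  ultimately show "lattice_word w \<and> (\<forall>k. x = Suc k \<longrightarrow> count_list w x + m \<le> count_list w k)"
    by blast
next
  assume "lattice_word w \<and> (\<forall>k. x = Suc k \<longrightarrow> count_list w x + m \<le> count_list w k)"
  then have lat: "lattice_word w"
    and last: "\<And>k. x = Suc k \<Longrightarrow> count_list w x + m \<le> count_list w k"
    by blast+
  have full: "count_list w (Suc k) \<le> count_list w k" for k
    using lat[unfolded lattice_word_def, rule_format, of "length w" k] by simp
  show "lattice_word (w @ replicate m x)"
    unfolding lattice_word_def
  proof (intro allI impI)
    fix p k
    show "count_list (take p (w @ replicate m x)) (Suc k) \<le>
      count_list (take p (w @ replicate m x)) k"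
    proof (cases "p \<le> length w")
      case True
      then show ?thesis using lat by (simp add: lattice_word_def)
    next
      case False
      then show ?thesis
        using full[of k] last[of k] by (auto simp: count_list_replicate)
    qed
  qed
qed

section \<open>LR tableaux with at most three letters\<close>

lemma all_less_4_split: "(\<forall>k<4. P k) \<longleftrightarrow> (\<forall>k<3. P k) \<and> P (3::nat)"
  using All_less_Suc[of 3 P] by (simp add: conj_commute)

lemma all_less_4_iff: "(\<forall>i<4. P i) \<longleftrightarrow> P 0 \<and> P 1 \<and> P 2 \<and> P (3::nat)"
  by (auto simp: less_Suc_eq eval_nat_numeral)

lemma all_less_3_iff: "(\<forall>i<3. P i) \<longleftrightarrow> P 0 \<and> P 1 \<and> P (2::nat)"
  by (auto simp: less_Suc_eq eval_nat_numeral)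

lemma Lambda4_antimono: "l \<in> Lambda4 \<Longrightarrow> i \<le> j \<Longrightarrow> j < 4 \<Longrightarrow> l ! j \<le> l ! i"
  unfolding Lambda4_def by (cases "i = j") (auto simp: sorted_wrt_iff_nth_less)

lemma list4_in_Lambda4_iff: "[x0, x1, x2, x3] \<in> Lambda4 \<longleftrightarrow> x1 \<le> x0 \<and> x2 \<le> x1 \<and> x3 \<le> x2"
  unfolding Lambda4_def by auto

lemma Lambda4_cases:
  assumes "l \<in> Lambda4"
  obtains x0 x1 x2 x3 where "l = [x0, x1, x2, x3]"
  using assms unfolding Lambda4_def by (auto simp: length_Suc_conv eval_nat_numeral)

definition tableau_of_row_contents :: "nat list \<Rightarrow> (nat \<Rightarrow> nat \<Rightarrow> nat) \<Rightarrow> nat \<Rightarrow> nat \<Rightarrow> nat" where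
  "tableau_of_row_contents lam m i j =
     (if i < 4 \<and> lam ! i \<le> j \<and> j < lam ! i + m i 0 + m i 1 + m i 2
      then row_filling (lam ! i) (m i 0) (m i 1) j else 0)"

lemma tableau_of_row_contents_cong:
  "(\<And>i k. i < 4 \<Longrightarrow> k < 3 \<Longrightarrow> m i k = m' i k) \<Longrightarrow>
    tableau_of_row_contents lam m = tableau_of_row_contents lam m'"
proof (intro ext)
  fix i j
  assume eq: "\<And>i k. i < 4 \<Longrightarrow> k < 3 \<Longrightarrow> m i k = m' i k"
  show "tableau_of_row_contents lam m i j = tableau_of_row_contents lam m' i j"
    using eq[of i 0] eq[of i 1] eq[of i 2]
    by (cases "i < 4") (simp_all add: tableau_of_row_contents_def)
qed

definition row_contents_word :: "(nat \<Rightarrow> nat \<Rightarrow> nat) \<Rightarrow> nat \<Rightarrow> nat list" where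
  "row_contents_word m n =
     concat (map (\<lambda>i. replicate (m i 2) 2 @ replicate (m i 1) 1 @ replicate (m i 0) 0) [0..<n])"

lemma reading_word_tableau_of_row_contents:
  assumes "\<forall>i<4. nu ! i = lam ! i + m i 0 + m i 1 + m i 2"
  shows "reading_word lam nu (tableau_of_row_contents lam m) = row_contents_word m 4"
  unfolding reading_word_def row_contents_word_def
proof (intro arg_cong[where f = concat] map_cong refl)
  fix i
  assume "i \<in> set [0..<4]"
  then have nu: "nu ! i = lam ! i + m i 0 + m i 1 + m i 2" and "i < 4"
    using assms by auto
  then have "map (tableau_of_row_contents lam m i) (rev [lam ! i..<nu ! i]) =
      map (row_filling (lam ! i) (m i 0) (m i 1)) (rev [lam ! i..<nu ! i])"
    by (intro map_cong) (auto simp: tableau_of_row_contents_def)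
  then show "map (tableau_of_row_contents lam m i) (rev [lam ! i..<nu ! i]) =
      replicate (m i 2) 2 @ replicate (m i 1) 1 @ replicate (m i 0) 0"
    unfolding nu by (simp add: rev_map_row_filling)
qed


lemma count_list_row_contents_word:
  "count_list (row_contents_word m n) k = (if k < 3 then \<Sum>i<n. m i k else 0)"
  by (induction n)
    (auto simp: row_contents_word_def count_list_replicate numeral_eq_Suc less_Suc_eq)

lemma lattice_word_row_contents_word:
  "lattice_word (row_contents_word m n) \<longleftrightarrow>
    (\<forall>r<n. (\<Sum>i<r. m i 2) + m r 2 \<le> (\<Sum>i<r. m i 1) \<and> (\<Sum>i<r. m i 1) + m r 1 \<le> (\<Sum>i<r. m i 0))"
proof (induction n)
  case (Suc n)
  have w: "row_contents_word m (Suc n) =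
      ((row_contents_word m n @ replicate (m n 2) 2) @ replicate (m n 1) 1) @ replicate (m n 0) 0"
    by (simp add: row_contents_word_def)
  show ?case
    unfolding w lattice_word_append_replicate count_list_append count_list_replicate
      count_list_row_contents_word Suc.IH
    by (auto simp: less_Suc_eq)
qed (simp add: row_contents_word_def)

lemma skew_cell_row_contents:
  assumes "\<forall>i<4. nu ! i = lam ! i + m i 0 + m i 1 + m i 2"
  shows "skew_cell lam nu i j \<longleftrightarrow> i < 4 \<and> lam ! i \<le> j \<and> j < lam ! i + m i 0 + m i 1 + m i 2"
  using assms by (auto simp: skew_cell_def)

lemma column_strict_tableau_of_row_contents_iff:
  assumes shape: "\<forall>i<4. nu ! i = lam ! i + m i 0 + m i 1 + m i 2"
    and partitions: "lam \<in> Lambda4" "nu \<in> Lambda4" and "i < 3"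
  shows "(\<forall>j. skew_cell lam nu i j \<and> skew_cell lam nu (Suc i) j \<longrightarrow>
      tableau_of_row_contents lam m i j < tableau_of_row_contents lam m (Suc i) j) \<longleftrightarrow>
    lam ! Suc i + m (Suc i) 0 \<le> lam ! i \<and>
    lam ! Suc i + m (Suc i) 0 + m (Suc i) 1 \<le> lam ! i + m i 0 \<and>
    nu ! Suc i \<le> lam ! i + m i 0 + m i 1"
    (is "?strict \<longleftrightarrow> ?bounds")
proof -
  have lam: "lam ! Suc i \<le> lam ! i" and nu: "nu ! Suc i \<le> nu ! i"
    using partitions \<open>i < 3\<close> by (simp_all add: Lambda4_antimono)
  have "(\<forall>j. skew_cell lam nu i j \<and> skew_cell lam nu (Suc i) j \<longrightarrow>
      tableau_of_row_contents lam m i j < tableau_of_row_contents lam m (Suc i) j) \<longleftrightarrow>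
    (\<forall>j. lam ! i \<le> j \<longrightarrow> j < nu ! Suc i \<longrightarrow>
      row_filling (lam ! i) (m i 0) (m i 1) j <
        row_filling (lam ! Suc i) (m (Suc i) 0) (m (Suc i) 1) j)"
    using shape lam nu \<open>i < 3\<close> by (auto simp: skew_cell_def tableau_of_row_contents_def)
  also have "\<dots> \<longleftrightarrow> ?bounds"
    using shape lam nu \<open>i < 3\<close>
    by (intro column_strict_row_filling_iff[where u = "nu ! i"]) simp_all
  finally show ?thesis .
qed

lemma LR_tableau_entry_le_2:
  assumes "T \<in> LR_tableaux lam mu nu" "mu ! 3 = 0" "skew_cell lam nu i j"
  shows "T i j \<le> 2"
proof -
  have "T i j \<in> set (reading_word lam nu T)"
    using assms(3) unfolding reading_word_def skew_cell_def by force
  moreover have "count_list (reading_word lam nu T) 3 = 0"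
    using assms(1,2) by (simp add: LR_tableaux_def)
  ultimately have "T i j \<noteq> 3"
    by (auto simp: count_list_0_iff)
  moreover have "T i j < 4"
    using assms(1,3) by (simp add: LR_tableaux_def)
  ultimately show ?thesis
    by linarith
qed

lemma LR_tableau_eq_tableau_of_row_contents:
  assumes T: "T \<in> LR_tableaux lam mu nu" and "mu ! 3 = 0" and fits: "\<forall>i<4. lam ! i \<le> nu ! i"
  obtains m where "\<forall>i<4. nu ! i = lam ! i + m i 0 + m i 1 + m i 2"
    and "T = tableau_of_row_contents lam m"
proof -
  have "\<exists>c :: nat \<Rightarrow> nat. nu ! i = lam ! i + c 0 + c 1 + c 2 \<and>
      (\<forall>j. lam ! i \<le> j \<longrightarrow> j < nu ! i \<longrightarrow> T i j = row_filling (lam ! i) (c 0) (c 1) j)"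
    if "i < 4" for i
  proof -
    have "\<exists>z y. lam ! i + z + y \<le> nu ! i \<and>
        (\<forall>j. lam ! i \<le> j \<longrightarrow> j < nu ! i \<longrightarrow> T i j = row_filling (lam ! i) z y j)"
    proof (rule weakly_increasing_eq_row_filling)
      show "lam ! i \<le> nu ! i"
        using fits that by blast
      show "T i j \<le> T i (Suc j)" if "lam ! i \<le> j" "Suc j < nu ! i" for j
        using T \<open>i < 4\<close> that by (simp add: LR_tableaux_def skew_cell_def)
      show "T i j \<le> 2" if "lam ! i \<le> j" "j < nu ! i" for j
        using LR_tableau_entry_le_2[OF T \<open>mu ! 3 = 0\<close>] \<open>i < 4\<close> that by (simp add: skew_cell_def)
    qed
    then obtain z y where "lam ! i + z + y \<le> nu ! i"
      and "\<forall>j. lam ! i \<le> j \<longrightarrow> j < nu ! i \<longrightarrow> T i j = row_filling (lam ! i) z y j"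
      by blast
    then show ?thesis
      by (intro exI[of _ "\<lambda>k. if k = 0 then z else if k = 1 then y else nu ! i - lam ! i - z - y"])
        simp
  qed
  then obtain m :: "nat \<Rightarrow> nat \<Rightarrow> nat"
    where m: "\<And>i. i < 4 \<Longrightarrow> nu ! i = lam ! i + m i 0 + m i 1 + m i 2 \<and>
      (\<forall>j. lam ! i \<le> j \<longrightarrow> j < nu ! i \<longrightarrow> T i j = row_filling (lam ! i) (m i 0) (m i 1) j)"
    by metis
  have "T = tableau_of_row_contents lam m"
  proof (intro ext)
    fix i j
    show "T i j = tableau_of_row_contents lam m i j"
      using T m[of i] by (cases "skew_cell lam nu i j")
        (auto simp: LR_tableaux_def skew_cell_def tableau_of_row_contents_def)
  qed
  with m show ?thesis
    using that by blast
qed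

text \<open>\<open>m i k\<close> counts the entries \<open>k\<close> in row \<open>i\<close>.  The four conjuncts express, in this
  order: the shape \<open>nu/lam\<close>, strictly increasing columns, the content \<open>mu\<close>, and the
  lattice property of the reverse reading word.\<close>

definition LR_row_contents :: "nat list \<Rightarrow> nat list \<Rightarrow> nat list \<Rightarrow> (nat \<Rightarrow> nat \<Rightarrow> nat) \<Rightarrow> bool" where
  "LR_row_contents lam mu nu m \<longleftrightarrow>
     (\<forall>i<4. nu ! i = lam ! i + m i 0 + m i 1 + m i 2) \<and>
     (\<forall>i<3. lam ! Suc i + m (Suc i) 0 \<le> lam ! i \<and>
        lam ! Suc i + m (Suc i) 0 + m (Suc i) 1 \<le> lam ! i + m i 0 \<and>
        nu ! Suc i \<le> lam ! i + m i 0 + m i 1) \<and>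
     (\<forall>k<3. (\<Sum>i<4. m i k) = mu ! k) \<and>
     (\<forall>r<4. (\<Sum>i<r. m i 2) + m r 2 \<le> (\<Sum>i<r. m i 1) \<and>
        (\<Sum>i<r. m i 1) + m r 1 \<le> (\<Sum>i<r. m i 0))"

lemma mem_LR_tableaux_iff_row_contents:
  assumes "mu ! 3 = 0" and partitions: "lam \<in> Lambda4" "nu \<in> Lambda4"
    and fits: "\<forall>i<4. lam ! i \<le> nu ! i"
  shows "T \<in> LR_tableaux lam mu nu \<longleftrightarrow>
    (\<exists>m. LR_row_contents lam mu nu m \<and> T = tableau_of_row_contents lam m)"
proof -
  have "T \<in> LR_tableaux lam mu nu \<longleftrightarrow> LR_row_contents lam mu nu m"
    if shape: "\<forall>i<4. nu ! i = lam ! i + m i 0 + m i 1 + m i 2"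
      and T: "T = tableau_of_row_contents lam m" for m
  proof -
    have word: "reading_word lam nu T = row_contents_word m 4"
      unfolding T by (rule reading_word_tableau_of_row_contents[OF shape])
    have "(\<forall>k<4. count_list (reading_word lam nu T) k = mu ! k) \<longleftrightarrow> (\<forall>k<3. (\<Sum>i<4. m i k) = mu ! k)"
      unfolding word count_list_row_contents_word all_less_4_split using \<open>mu ! 3 = 0\<close> by simp
    moreover have "(\<forall>i j. skew_cell lam nu i j \<and> skew_cell lam nu (Suc i) j \<longrightarrow> T i j < T (Suc i) j) \<longleftrightarrow>
        (\<forall>i<3. lam ! Suc i + m (Suc i) 0 \<le> lam ! i \<and>
          lam ! Suc i + m (Suc i) 0 + m (Suc i) 1 \<le> lam ! i + m i 0 \<and>
          nu ! Suc i \<le> lam ! i + m i 0 + m i 1)"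
      using column_strict_tableau_of_row_contents_iff[OF shape partitions]
      by (auto simp: T skew_cell_def)
    moreover have "\<forall>i j. \<not> skew_cell lam nu i j \<longrightarrow> T i j = 0"
      by (simp add: T tableau_of_row_contents_def skew_cell_row_contents[OF shape])
    moreover have "\<forall>i j. skew_cell lam nu i j \<longrightarrow> T i j < 4"
      by (simp add: T tableau_of_row_contents_def row_filling_def)
    moreover have "\<forall>i j. skew_cell lam nu i j \<and> skew_cell lam nu i (Suc j) \<longrightarrow> T i j \<le> T i (Suc j)"
      by (simp add: T tableau_of_row_contents_def skew_cell_row_contents[OF shape] row_filling_mono)
    ultimately show ?thesis
      using shape
      unfolding LR_tableaux_def mem_Collect_eq LR_row_contents_def lattice_word_def[symmetric]
        word lattice_word_row_contents_word
      by blast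
  qed
  moreover have "\<exists>m. (\<forall>i<4. nu ! i = lam ! i + m i 0 + m i 1 + m i 2) \<and>
      T = tableau_of_row_contents lam m" if "T \<in> LR_tableaux lam mu nu"
    using LR_tableau_eq_tableau_of_row_contents[OF that \<open>mu ! 3 = 0\<close> fits] by metis
  ultimately show ?thesis
    unfolding LR_row_contents_def by blast
qed

lemma finite_LR_tableaux: "finite (LR_tableaux lam mu nu)"
proof -
  let ?cells = "{(i, j). skew_cell lam nu i j}"
  have "finite ?cells"
    by (rule finite_subset[of _ "\<Union>i<4. {i} \<times> {..<nu ! i}"]) (auto simp: skew_cell_def)
  then have "finite {f. \<forall>x. (x \<in> ?cells \<longrightarrow> f x \<in> {..<4::nat}) \<and> (x \<notin> ?cells \<longrightarrow> f x = 0)}"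
    by (intro finite_set_of_finite_funs) simp_all
  moreover have "case_prod ` LR_tableaux lam mu nu \<subseteq>
      {f. \<forall>x. (x \<in> ?cells \<longrightarrow> f x \<in> {..<4}) \<and> (x \<notin> ?cells \<longrightarrow> f x = 0)}"
    by (auto simp: LR_tableaux_def)
  ultimately have "finite (case_prod ` LR_tableaux lam mu nu)"
    by (rule finite_subset[rotated])
  moreover have "inj_on case_prod (LR_tableaux lam mu nu)"
    by (intro inj_onI) (metis curry_case_prod)
  ultimately show ?thesis
    by (rule finite_imageD)
qed

section \<open>Parametrising S\<close>

text \<open>For \<open>lam = (a, b, b, 0)\<close>, \<open>mij\<close> is the number of letters \<open>j\<close> in row \<open>i\<close> of the
  tableau (both counted from 1); all other counts are forced to vanish.\<close>

definition lr_cond :: "nat \<Rightarrow> nat \<Rightarrow> nat \<Rightarrow> nat \<Rightarrow> nat \<Rightarrow> nat \<Rightarrow> nat \<Rightarrow> nat \<Rightarrow> nat \<Rightarrow> bool" where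
  "lr_cond a b m11 m21 m22 m32 m33 m41 m43 \<longleftrightarrow>
     m21 + b \<le> a \<and> m32 \<le> m21 \<and> m41 \<le> b \<and> m41 + m43 \<le> b + m32 \<and>
     m22 \<le> m11 \<and> m33 \<le> m22 \<and> m22 + m32 \<le> m11 + m21 \<and>
     m22 + m32 = m33 + m43"

definition lr_triple :: "nat \<Rightarrow> nat \<Rightarrow> nat \<Rightarrow> nat \<Rightarrow> nat \<Rightarrow> nat \<Rightarrow> nat \<Rightarrow> nat \<Rightarrow> nat \<Rightarrow> triple" where
  "lr_triple a b m11 m21 m22 m32 m33 m41 m43 =
     ([a, b, b, 0], [m11 + m21 + m41, m22 + m32, m33 + m43, 0],
      [a + m11, b + m21 + m22, b + m32 + m33, m41 + m43])"

definition lr_row_contents :: "nat \<Rightarrow> nat \<Rightarrow> nat \<Rightarrow> nat \<Rightarrow> nat \<Rightarrow> nat \<Rightarrow> nat \<Rightarrow> nat \<Rightarrow> nat \<Rightarrow> nat" where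
  "lr_row_contents m11 m21 m22 m32 m33 m41 m43 i k =
     [[m11, 0, 0], [m21, m22, 0], [0, m32, m33], [m41, 0, m43]] ! i ! k"

lemma LR_row_contents_imp_lr_cond:
  fixes m :: "nat \<Rightarrow> nat \<Rightarrow> nat"
  assumes "LR_row_contents [a, b, b, 0] [c, d, d, 0] nu m" and "length nu = 4"
  defines "m' \<equiv> lr_row_contents (m 0 0) (m 1 0) (m 1 1) (m 2 1) (m 2 2) (m 3 0) (m 3 2)"
  shows "lr_cond a b (m 0 0) (m 1 0) (m 1 1) (m 2 1) (m 2 2) (m 3 0) (m 3 2)"
    and "lr_triple a b (m 0 0) (m 1 0) (m 1 1) (m 2 1) (m 2 2) (m 3 0) (m 3 2) =
      ([a, b, b, 0], [c, d, d, 0], nu)"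
    and "\<forall>i<4. \<forall>k<3. m i k = m' i k"
proof -
  obtain n0 n1 n2 n3 where nu: "nu = [n0, n1, n2, n3]"
    using \<open>length nu = 4\<close> by (auto simp: length_Suc_conv numeral_eq_Suc)
  note expand = LR_row_contents_def nu numeral_eq_Suc All_less_Suc lessThan_Suc
  show "lr_cond a b (m 0 0) (m 1 0) (m 1 1) (m 2 1) (m 2 2) (m 3 0) (m 3 2)"
    using assms(1) unfolding lr_cond_def by (simp add: expand)
  show "lr_triple a b (m 0 0) (m 1 0) (m 1 1) (m 2 1) (m 2 2) (m 3 0) (m 3 2) =
      ([a, b, b, 0], [c, d, d, 0], nu)"
    using assms(1) unfolding lr_triple_def by (simp add: expand)
  show "\<forall>i<4. \<forall>k<3. m i k = m' i k"
    using assms(1) unfolding all_less_4_iff all_less_3_iff m'_def lr_row_contents_def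
    by (simp add: expand)
qed

lemma lr_cond_imp_LR_row_contents:
  assumes "lr_cond a b m11 m21 m22 m32 m33 m41 m43"
    and "lr_triple a b m11 m21 m22 m32 m33 m41 m43 = (lam, mu, nu)"
  shows "LR_row_contents lam mu nu (lr_row_contents m11 m21 m22 m32 m33 m41 m43)"
  using assms
  by (auto simp: LR_row_contents_def lr_cond_def lr_triple_def lr_row_contents_def
      numeral_eq_Suc All_less_Suc lessThan_Suc)

lemma LR_tableaux_eq_lr_fibre:
  assumes "b \<le> a" and nu: "nu \<in> Lambda4" and fits: "\<forall>i<4. [a, b, b, 0] ! i \<le> nu ! i"
  shows "LR_tableaux [a, b, b, 0] [c, d, d, 0] nu =
    {tableau_of_row_contents [a, b, b, 0] (lr_row_contents m11 m21 m22 m32 m33 m41 m43)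
      | m11 m21 m22 m32 m33 m41 m43. lr_cond a b m11 m21 m22 m32 m33 m41 m43 \<and>
        lr_triple a b m11 m21 m22 m32 m33 m41 m43 = ([a, b, b, 0], [c, d, d, 0], nu)}"
    (is "_ = ?fibre")
proof -
  have lam: "[a, b, b, 0] \<in> Lambda4" and "length nu = 4"
    using \<open>b \<le> a\<close> nu by (simp_all add: list4_in_Lambda4_iff Lambda4_def)
  have row_contents: "T \<in> LR_tableaux [a, b, b, 0] [c, d, d, 0] nu \<longleftrightarrow>
      (\<exists>m. LR_row_contents [a, b, b, 0] [c, d, d, 0] nu m \<and>
        T = tableau_of_row_contents [a, b, b, 0] m)"
    for T
    by (rule mem_LR_tableaux_iff_row_contents[OF _ lam nu fits]) simp
  show ?thesis
  proof (intro set_eqI iffI)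
    fix T
    assume "T \<in> LR_tableaux [a, b, b, 0] [c, d, d, 0] nu"
    then obtain m where m: "LR_row_contents [a, b, b, 0] [c, d, d, 0] nu m"
      and T: "T = tableau_of_row_contents [a, b, b, 0] m"
      using row_contents by blast
    have "T = tableau_of_row_contents [a, b, b, 0]
        (lr_row_contents (m 0 0) (m 1 0) (m 1 1) (m 2 1) (m 2 2) (m 3 0) (m 3 2))"
      unfolding T using LR_row_contents_imp_lr_cond(3)[OF m \<open>length nu = 4\<close>]
      by (intro tableau_of_row_contents_cong) blast
    then show "T \<in> ?fibre"
      using LR_row_contents_imp_lr_cond(1,2)[OF m \<open>length nu = 4\<close>] by blast
  next
    fix T
    assume "T \<in> ?fibre"
    then show "T \<in> LR_tableaux [a, b, b, 0] [c, d, d, 0] nu"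
      using row_contents lr_cond_imp_LR_row_contents by blast
  qed
qed

lemma lr_triple_in_Lambda4:
  assumes "lr_cond a b m11 m21 m22 m32 m33 m41 m43"
    and "lr_triple a b m11 m21 m22 m32 m33 m41 m43 = (lam, mu, nu)"
  shows "lam \<in> Lambda4" "mu \<in> Lambda4" "nu \<in> Lambda4" "\<forall>i<4. lam ! i \<le> nu ! i"
  using assms by (auto simp: lr_cond_def lr_triple_def list4_in_Lambda4_iff all_less_4_iff)

lemma S_set_lr_tripleE:
  assumes "t \<in> S_set"
  obtains a b m11 m21 m22 m32 m33 m41 m43 where "lr_cond a b m11 m21 m22 m32 m33 m41 m43"
    and "t = lr_triple a b m11 m21 m22 m32 m33 m41 m43"
proof -
  obtain lam mu nu where t: "t = (lam, mu, nu)" and lam: "lam \<in> Lambda4" and mu: "mu \<in> Lambda4"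
    and nu: "nu \<in> Lambda4" and LR: "LR_coeff lam mu nu \<noteq> 0"
    and zeros: "lam ! 3 = 0" "mu ! 3 = 0" and equal: "lam ! 1 = lam ! 2" "mu ! 1 = mu ! 2"
    using assms unfolding S_set_def by blast
  obtain a b b' z where lam_list: "lam = [a, b, b', z]"
    using lam by (rule Lambda4_cases)
  obtain c d d' z' where mu_list: "mu = [c, d, d', z']"
    using mu by (rule Lambda4_cases)
  have lam_eq: "lam = [a, b, b, 0]" and mu_eq: "mu = [c, d, d, 0]"
    using zeros equal by (simp_all add: lam_list mu_list)
  have "b \<le> a"
    using lam by (simp add: lam_eq list4_in_Lambda4_iff)
  moreover have "\<forall>i<4. lam ! i \<le> nu ! i" and "LR_tableaux lam mu nu \<noteq> {}"
    using LR by (auto simp: LR_coeff_def split: if_splits)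
  ultimately obtain m11 m21 m22 m32 m33 m41 m43 where "lr_cond a b m11 m21 m22 m32 m33 m41 m43"
    and "lr_triple a b m11 m21 m22 m32 m33 m41 m43 = (lam, mu, nu)"
    using LR_tableaux_eq_lr_fibre[OF _ nu, of b a c d] unfolding lam_eq mu_eq by blast
  with that show ?thesis
    unfolding t by metis
qed

lemma LR_tableaux_lr_triple:
  assumes cond: "lr_cond a b m11 m21 m22 m32 m33 m41 m43"
    and lr: "lr_triple a b m11 m21 m22 m32 m33 m41 m43 = (lam, mu, nu)"
  shows "LR_tableaux lam mu nu =
      {tableau_of_row_contents lam (lr_row_contents m11' m21' m22' m32' m33' m41' m43')
        | m11' m21' m22' m32' m33' m41' m43'. lr_cond a b m11' m21' m22' m32' m33' m41' m43' \<and>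
          lr_triple a b m11' m21' m22' m32' m33' m41' m43' = (lam, mu, nu)}"
proof -
  note partitions = lr_triple_in_Lambda4[OF cond lr]
  have lam: "lam = [a, b, b, 0]" and mu: "mu = [m11 + m21 + m41, m22 + m32, m22 + m32, 0]"
    using cond lr by (auto simp: lr_triple_def lr_cond_def)
  have "b \<le> a"
    using cond by (simp add: lr_cond_def)
  moreover have "\<forall>i<4. [a, b, b, 0] ! i \<le> nu ! i"
    using partitions(4) by (simp only: lam)
  ultimately show ?thesis
    unfolding lam mu by (rule LR_tableaux_eq_lr_fibre[OF _ partitions(3)])
qed

lemma lr_triple_in_S_set:
  assumes cond: "lr_cond a b m11 m21 m22 m32 m33 m41 m43"
  shows "lr_triple a b m11 m21 m22 m32 m33 m41 m43 \<in> S_set"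
proof -
  obtain lam mu nu where lr: "lr_triple a b m11 m21 m22 m32 m33 m41 m43 = (lam, mu, nu)"
    by (metis prod_cases3)
  note partitions = lr_triple_in_Lambda4[OF cond lr]
  have "LR_tableaux lam mu nu \<noteq> {}"
    unfolding LR_tableaux_lr_triple[OF cond lr] using cond lr by blast
  then have "LR_coeff lam mu nu \<noteq> 0"
    using partitions by (simp add: LR_coeff_def finite_LR_tableaux)
  moreover have "lam ! 3 = 0 \<and> lam ! 1 = lam ! 2 \<and> mu ! 3 = 0 \<and> mu ! 1 = mu ! 2"
    using cond lr by (auto simp: lr_triple_def lr_cond_def)
  ultimately show ?thesis
    using partitions unfolding S_set_def lr by simp
qed

lemma LR_coeff_lr_triple_eq_1:
  assumes cond: "lr_cond a b m11 m21 m22 m32 m33 m41 m43"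
    and unique: "\<And>m11' m21' m22' m32' m33' m41' m43'.
      lr_cond a b m11' m21' m22' m32' m33' m41' m43' \<Longrightarrow>
      lr_triple a b m11' m21' m22' m32' m33' m41' m43' = lr_triple a b m11 m21 m22 m32 m33 m41 m43 \<Longrightarrow>
      (m11', m21', m22', m32', m33', m41', m43') = (m11, m21, m22, m32, m33, m41, m43)"
  shows "case lr_triple a b m11 m21 m22 m32 m33 m41 m43 of (lam, mu, nu) \<Rightarrow> LR_coeff lam mu nu = 1"
proof -
  obtain lam mu nu where lr: "lr_triple a b m11 m21 m22 m32 m33 m41 m43 = (lam, mu, nu)"
    by (metis prod_cases3)
  have "LR_tableaux lam mu nu =
      {tableau_of_row_contents lam (lr_row_contents m11 m21 m22 m32 m33 m41 m43)}"
  proof (intro equalityI subsetI)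
    fix T
    assume "T \<in> LR_tableaux lam mu nu"
    then obtain m11' m21' m22' m32' m33' m41' m43'
      where cond': "lr_cond a b m11' m21' m22' m32' m33' m41' m43'"
      and lr': "lr_triple a b m11' m21' m22' m32' m33' m41' m43' = (lam, mu, nu)"
      and T: "T = tableau_of_row_contents lam (lr_row_contents m11' m21' m22' m32' m33' m41' m43')"
      unfolding LR_tableaux_lr_triple[OF cond lr] by blast
    have "(m11', m21', m22', m32', m33', m41', m43') = (m11, m21, m22, m32, m33, m41, m43)"
      using unique[OF cond' lr'[folded lr]] .
    then show "T \<in> {tableau_of_row_contents lam (lr_row_contents m11 m21 m22 m32 m33 m41 m43)}"
      by (simp add: T)
  next
    fix T
    assume "T \<in> {tableau_of_row_contents lam (lr_row_contents m11 m21 m22 m32 m33 m41 m43)}"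
    then show "T \<in> LR_tableaux lam mu nu"
      unfolding LR_tableaux_lr_triple[OF cond lr] using cond lr by blast
  qed
  then show ?thesis
    using lr_triple_in_Lambda4[OF cond lr] lr by (simp add: LR_coeff_def)
qed

lemma gens_eq_lr_triples:
  "gens = [lr_triple 1 0 0 0 0 0 0 0 0, lr_triple 0 0 1 0 0 0 0 0 0, lr_triple 1 1 0 0 0 0 0 0 0,
    lr_triple 0 0 1 0 1 0 1 0 0, lr_triple 1 0 0 1 0 0 0 0 0, lr_triple 1 0 0 1 0 1 0 0 1,
    lr_triple 1 1 0 0 0 0 0 1 0, lr_triple 1 1 1 0 1 0 0 0 1]"
  by (simp add: gens_def lr_triple_def)

lemma LR_coeff_gens: "\<forall>t \<in> set gens. case t of (lam, mu, nu) \<Rightarrow> LR_coeff lam mu nu = 1"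
  unfolding gens_eq_lr_triples list.set ball_simps
  by (intro conjI TrueI LR_coeff_lr_triple_eq_1; auto simp: lr_cond_def lr_triple_def)

lemma lr_cond_decompose:
  assumes cond: "lr_cond a b m11 m21 m22 m32 m33 m41 m43"
    and nonzero: "lr_triple a b m11 m21 m22 m32 m33 m41 m43 \<noteq> tzero"
  obtains g a' b' m11' m21' m22' m32' m33' m41' m43' where "g \<in> set gens"
    and "lr_cond a' b' m11' m21' m22' m32' m33' m41' m43'"
    and "lr_triple a b m11 m21 m22 m32 m33 m41 m43 =
      tadd g (lr_triple a' b' m11' m21' m22' m32' m33' m41' m43')"
proof -
  note simps = gens_eq_lr_triples tadd_def lr_triple_def lr_cond_def
  consider "0 < m41" | "0 < m32" "0 < m43" | "m41 = 0" "m32 = 0" "0 < m43"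
    | "m41 = 0" "m43 = 0" "0 < m22" | "m41 = 0" "m43 = 0" "m22 = 0" "0 < b"
    | "m41 = 0" "m43 = 0" "m22 = 0" "b = 0" "0 < m21"
    | "m41 = 0" "m43 = 0" "m22 = 0" "b = 0" "m21 = 0" "0 < a"
    | "m41 = 0" "m43 = 0" "m22 = 0" "b = 0" "m21 = 0" "a = 0"
    by force
  then show ?thesis
  proof cases
    case 1
    then show ?thesis
      using cond by (intro that[of "lr_triple 1 1 0 0 0 0 0 1 0"
          "a - 1" "b - 1" m11 m21 m22 m32 m33 "m41 - 1" m43]) (auto simp: simps)
  next
    case 2
    then show ?thesis
      using cond by (intro that[of "lr_triple 1 0 0 1 0 1 0 0 1"
          "a - 1" b m11 "m21 - 1" m22 "m32 - 1" m33 m41 "m43 - 1"]) (auto simp: simps)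
  next
    case 3
    then show ?thesis
      using cond by (intro that[of "lr_triple 1 1 1 0 1 0 0 0 1"
          "a - 1" "b - 1" "m11 - 1" m21 "m22 - 1" m32 m33 m41 "m43 - 1"]) (auto simp: simps)
  next
    case 4
    then show ?thesis
      using cond by (intro that[of "lr_triple 0 0 1 0 1 0 1 0 0"
          a b "m11 - 1" m21 "m22 - 1" m32 "m33 - 1" m41 m43]) (auto simp: simps)
  next
    case 5
    then show ?thesis
      using cond by (intro that[of "lr_triple 1 1 0 0 0 0 0 0 0"
          "a - 1" "b - 1" m11 m21 m22 m32 m33 m41 m43]) (auto simp: simps)
  next
    case 6
    then show ?thesis
      using cond by (intro that[of "lr_triple 1 0 0 1 0 0 0 0 0"
          "a - 1" b m11 "m21 - 1" m22 m32 m33 m41 m43]) (auto simp: simps)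
  next
    case 7
    then show ?thesis
      using cond by (intro that[of "lr_triple 1 0 0 0 0 0 0 0 0"
          "a - 1" b m11 m21 m22 m32 m33 m41 m43]) (auto simp: simps)
  next
    case 8
    then show ?thesis
      using cond nonzero by (intro that[of "lr_triple 0 0 1 0 0 0 0 0 0"
          a b "m11 - 1" m21 m22 m32 m33 m41 m43]) (auto simp: simps tzero_def)
  qed
qed

lemma gens_subset_S_set: "set gens \<subseteq> S_set"
  unfolding gens_eq_lr_triples by (auto intro!: lr_triple_in_S_set simp: lr_cond_def)

lemma tzero_notin_gens: "tzero \<notin> set gens"
  by (simp add: gens_def tzero_def)

lemma S_set_decompose:
  assumes "t \<in> S_set" "t \<noteq> tzero"
  shows "\<exists>g\<in>set gens. \<exists>t'\<in>S_set. t = tadd g t'"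
proof -
  obtain a b m11 m21 m22 m32 m33 m41 m43 where cond: "lr_cond a b m11 m21 m22 m32 m33 m41 m43"
    and t: "t = lr_triple a b m11 m21 m22 m32 m33 m41 m43"
    using assms(1) by (rule S_set_lr_tripleE)
  obtain g a' b' m11' m21' m22' m32' m33' m41' m43' where "g \<in> set gens"
    and "lr_cond a' b' m11' m21' m22' m32' m33' m41' m43'"
    and "t = tadd g (lr_triple a' b' m11' m21' m22' m32' m33' m41' m43')"
    using lr_cond_decompose[OF cond assms(2)[unfolded t]] t by metis
  then show ?thesis
    using lr_triple_in_S_set by blast
qed

definition triple_degree :: "triple \<Rightarrow> nat" where
  "triple_degree t = sum_list (snd (snd t))"

lemma triple_degree_tadd:
  assumes "s \<in> S_set" "t \<in> S_set"
  shows "triple_degree (tadd s t) = triple_degree s + triple_degree t"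
  using assms by (elim S_set_lr_tripleE) (simp add: triple_degree_def tadd_def lr_triple_def)

lemma triple_degree_gens_pos: "g \<in> set gens \<Longrightarrow> 0 < triple_degree g"
  by (auto simp: gens_def triple_degree_def)

lemma tadd_tzero: "t \<in> S_set \<Longrightarrow> tadd t tzero = t"
  by (elim S_set_lr_tripleE) (simp add: lr_triple_def tadd_def tzero_def)

lemma S_set_induct [consumes 1, case_names zero tadd]:
  assumes "t \<in> S_set"
    and zero: "P tzero"
    and tadd: "\<And>g t. g \<in> set gens \<Longrightarrow> t \<in> S_set \<Longrightarrow> P t \<Longrightarrow> P (tadd g t)"
  shows "P t"
  using assms(1)
proof (induction "triple_degree t" arbitrary: t rule: less_induct)
  case less
  show ?case
  proof (cases "t = tzero")
    case True
    then show ?thesis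
      using zero by simp
  next
    case False
    then obtain g t' where g: "g \<in> set gens" and t': "t' \<in> S_set" and t: "t = tadd g t'"
      using S_set_decompose[OF less.prems] by blast
    have "triple_degree t' < triple_degree t"
      using triple_degree_tadd[OF subsetD[OF gens_subset_S_set g] t'] triple_degree_gens_pos[OF g]
      unfolding t by simp
    then have "P t'"
      using less.hyps t' by blast
    then show ?thesis
      unfolding t by (rule tadd[OF g t'])
  qed
qed

section \<open>Cones spanned by exposed vectors\<close>

lemma sum_scaleR_mem_convex_cone_hull:
  assumes "finite A" "A \<subseteq> X" "\<And>x. x \<in> A \<Longrightarrow> 0 \<le> c x"
  shows "(\<Sum>x\<in>A. c x *\<^sub>R x) \<in> convex_cone hull X"
  using assms
proof (induction A rule: finite_induct)
  case empty
  then show ?case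
    by (simp add: convex_cone_hull_contains_0)
next
  case (insert x A)
  then have "c x *\<^sub>R x \<in> convex_cone hull X"
    by (intro convex_cone_hull_mul hull_inc) auto
  moreover have "(\<Sum>x\<in>A. c x *\<^sub>R x) \<in> convex_cone hull X"
    using insert by simp
  ultimately show ?case
    unfolding sum.insert[OF insert.hyps] by (rule convex_cone_hull_add)
qed

lemma convex_cone_hull_finite:
  fixes X :: "'a::real_vector set"
  assumes "finite X"
  shows "convex_cone hull X = {\<Sum>x\<in>X. c x *\<^sub>R x | c. \<forall>x\<in>X. 0 \<le> c x}"
proof
  let ?K = "{\<Sum>x\<in>X. c x *\<^sub>R x | c. \<forall>x\<in>X. 0 \<le> c x}"
  have "convex_cone ?K"
    unfolding convex_cone_iff
  proof (intro conjI ballI allI impI)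
    show "0 \<in> ?K"
      by (intro CollectI exI[of _ "\<lambda>_. 0"]) simp
  next
    fix y z
    assume "y \<in> ?K" "z \<in> ?K"
    then obtain c d where "\<forall>x\<in>X. 0 \<le> c x" "y = (\<Sum>x\<in>X. c x *\<^sub>R x)"
      and "\<forall>x\<in>X. 0 \<le> d x" "z = (\<Sum>x\<in>X. d x *\<^sub>R x)"
      by blast
    then show "y + z \<in> ?K"
      by (intro CollectI exI[of _ "\<lambda>x. c x + d x"]) (simp add: scaleR_add_left sum.distrib)
  next
    fix y and t :: real
    assume "y \<in> ?K" "0 \<le> t"
    then obtain c where "\<forall>x\<in>X. 0 \<le> c x" "y = (\<Sum>x\<in>X. c x *\<^sub>R x)"
      by blast
    with \<open>0 \<le> t\<close> show "t *\<^sub>R y \<in> ?K"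
      by (intro CollectI exI[of _ "\<lambda>x. t * c x"]) (simp add: scaleR_sum_right)
  qed
  moreover have "X \<subseteq> ?K"
  proof
    fix y
    assume "y \<in> X"
    have "(\<Sum>x\<in>X. (if x = y then 1 else 0) *\<^sub>R x) = (\<Sum>x\<in>X. if x = y then x else 0)"
      by (rule sum.cong) auto
    then have "y = (\<Sum>x\<in>X. (if x = y then 1 else 0) *\<^sub>R x)"
      using assms \<open>y \<in> X\<close> by (simp add: sum.delta')
    then show "y \<in> ?K"
      by (intro CollectI exI[of _ "\<lambda>x. if x = y then 1 else 0"]) auto
  qed
  ultimately show "convex_cone hull X \<subseteq> ?K"
    by (rule hull_minimal[rotated])
qed (use assms sum_scaleR_mem_convex_cone_hull in blast)

lemma inner_nonneg_convex_cone_hull: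
  assumes "\<And>x. x \<in> X \<Longrightarrow> 0 \<le> h \<bullet> x" and "y \<in> convex_cone hull X"
  shows "0 \<le> h \<bullet> y"
proof -
  have "convex_cone hull X \<subseteq> {y. 0 \<le> h \<bullet> y}"
    using assms(1) by (intro hull_minimal convex_cone_halfspace_ge) auto
  with assms(2) show ?thesis
    by blast
qed

lemma face_of_convex_cone_summand:
  assumes "convex_cone C" "F face_of C" "x \<in> C" "y \<in> C" "x + y \<in> F"
  shows "x \<in> F"
proof -
  have "conic C"
    using assms(1) by (simp add: convex_cone_def)
  then have conic: "conic F"
    using assms(2) by (rule face_of_conic)
  have "2 *\<^sub>R x \<in> F"
  proof (cases "x = y")
    case True
    then show ?thesis
      using assms(5) by (simp add: scaleR_2)
  next
    case False
    have "x + y = midpoint (2 *\<^sub>R x) (2 *\<^sub>R y)"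
      by (simp add: midpoint_def scaleR_add_right[symmetric])
    then have "x + y \<in> open_segment (2 *\<^sub>R x) (2 *\<^sub>R y)"
      using False by (simp add: midpoint_in_open_segment)
    moreover have "2 *\<^sub>R x \<in> C" "2 *\<^sub>R y \<in> C"
      using assms(1,3,4) by (simp_all add: convex_cone_scaleR)
    ultimately show ?thesis
      using face_ofD[OF assms(2) _ _ _ assms(5)] by blast
  qed
  from conic_mul[OF conic this, of "1 / 2"] show ?thesis
    by simp
qed

lemma ray_scaleR:
  assumes "0 < c"
  shows "ray (c *\<^sub>R v) = ray v"
proof (intro equalityI subsetI)
  fix x
  assume "x \<in> ray (c *\<^sub>R v)"
  then obtain t where "0 \<le> t" "x = (t * c) *\<^sub>R v"
    by (auto simp: ray_def)
  then show "x \<in> ray v"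
    unfolding ray_def using assms by (intro CollectI exI[of _ "t * c"] conjI) simp_all
next
  fix x
  assume "x \<in> ray v"
  then obtain t where "0 \<le> t" "x = t *\<^sub>R v"
    by (auto simp: ray_def)
  then show "x \<in> ray (c *\<^sub>R v)"
    unfolding ray_def using assms by (intro CollectI exI[of _ "t / c"] conjI) simp_all
qed

lemma mem_ray_self: "v \<in> ray v"
  unfolding ray_def by (intro CollectI exI[of _ 1]) simp

lemma exposed_ray_face_of_convex_cone_hull:
  fixes X :: "'a::real_inner set"
  assumes "finite X" "x \<in> X" "h \<bullet> x = 0" "\<And>y. y \<in> X - {x} \<Longrightarrow> 0 < h \<bullet> y"
  shows "ray x face_of convex_cone hull X"
proof -
  have nonneg: "0 \<le> h \<bullet> y" if "y \<in> X" for y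
    using assms(3,4) that by (cases "y = x") (auto intro: less_imp_le)
  have "convex_cone hull X \<inter> {y. (- h) \<bullet> y = 0} face_of convex_cone hull X"
    using inner_nonneg_convex_cone_hull[OF nonneg]
    by (intro face_of_Int_supporting_hyperplane_le) (auto simp: convex_convex_cone_hull)
  moreover have "convex_cone hull X \<inter> {y. (- h) \<bullet> y = 0} = ray x"
  proof (intro equalityI subsetI)
    fix y
    assume "y \<in> convex_cone hull X \<inter> {y. (- h) \<bullet> y = 0}"
    then obtain c where c: "\<forall>z\<in>X. 0 \<le> c z" and y: "y = (\<Sum>z\<in>X. c z *\<^sub>R z)"
      and "(\<Sum>z\<in>X. c z * (h \<bullet> z)) = 0"
      using convex_cone_hull_finite[OF assms(1)] by (auto simp: inner_sum_right)
    then have "\<forall>z\<in>X. c z * (h \<bullet> z) = 0"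
      using nonneg assms(1) by (subst sum_nonneg_eq_0_iff[symmetric]) auto
    then have "\<forall>z\<in>X - {x}. c z = 0"
      using assms(4) by fastforce
    then have "y = c x *\<^sub>R x"
      unfolding y using assms(1,2) by (subst sum.remove[of _ x]) (auto intro: sum.neutral)
    then show "y \<in> ray x"
      unfolding ray_def using c assms(2) by blast
  next
    fix y
    assume "y \<in> ray x"
    then obtain t where "0 \<le> t" "y = t *\<^sub>R x"
      by (auto simp: ray_def)
    then show "y \<in> convex_cone hull X \<inter> {y. (- h) \<bullet> y = 0}"
      using assms(2,3) by (auto intro: convex_cone_hull_mul hull_inc)
  qed
  ultimately show ?thesis
    by simp
qed

lemma extremal_ray_convex_cone_hullE:
  fixes X :: "'a::real_inner set"
  assumes "finite X" "0 \<notin> X" "extremal_ray (convex_cone hull X) R"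
  obtains x where "x \<in> X" "R = ray x"
proof -
  obtain w where face: "R face_of convex_cone hull X" and "w \<noteq> 0" and R: "R = ray w"
    using assms(3) unfolding extremal_ray_def ray_def by blast
  have "w \<in> convex_cone hull X"
    using face_of_imp_subset[OF face] mem_ray_self R by blast
  then obtain c where c: "\<forall>z\<in>X. 0 \<le> c z" and w: "w = (\<Sum>z\<in>X. c z *\<^sub>R z)"
    using convex_cone_hull_finite[OF assms(1)] by blast
  have "\<exists>x\<in>X. 0 < c x"
  proof (rule ccontr)
    assume "\<not> (\<exists>x\<in>X. 0 < c x)"
    then have "\<forall>z\<in>X. c z = 0"
      using c by force
    then show False
      using w \<open>w \<noteq> 0\<close> by simp
  qed
  then obtain x where x: "x \<in> X" "0 < c x"
    by blast
  have "w = c x *\<^sub>R x + (\<Sum>z\<in>X - {x}. c z *\<^sub>R z)"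
    unfolding w using assms(1) x(1) by (rule sum.remove)
  moreover have "(\<Sum>z\<in>X - {x}. c z *\<^sub>R z) \<in> convex_cone hull X"
    using assms(1) c by (intro sum_scaleR_mem_convex_cone_hull) auto
  ultimately have "c x *\<^sub>R x \<in> R"
    using face_of_convex_cone_summand[OF convex_cone_convex_cone_hull face] x c
      mem_ray_self[of w] R by (auto intro: convex_cone_hull_mul hull_inc)
  then obtain t where "0 \<le> t" and t: "c x *\<^sub>R x = t *\<^sub>R w"
    unfolding R ray_def by blast
  moreover have "c x *\<^sub>R x \<noteq> 0"
    using assms(2) x by auto
  ultimately have "0 < t"
    by (cases "t = 0") auto
  have "w = (1 / t) *\<^sub>R (t *\<^sub>R w)"
    using \<open>0 < t\<close> by simp
  also have "\<dots> = (c x / t) *\<^sub>R x"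
    by (simp flip: t)
  finally have "w = (c x / t) *\<^sub>R x" .
  then have "R = ray x"
    unfolding R using x(2) \<open>0 < t\<close> by (simp add: ray_scaleR)
  with x(1) show ?thesis
    by (rule that)
qed

lemma extremal_rays_convex_cone_hull_exposed:
  fixes X :: "'a::real_inner set"
  assumes "finite X" "0 \<notin> X"
    and exposed: "\<And>x. x \<in> X \<Longrightarrow> \<exists>h. h \<bullet> x = 0 \<and> (\<forall>y\<in>X - {x}. 0 < h \<bullet> y)"
  shows "{R. extremal_ray (convex_cone hull X) R} = ray ` X"
proof (intro equalityI subsetI)
  fix R
  assume "R \<in> {R. extremal_ray (convex_cone hull X) R}"
  then obtain x where "x \<in> X" "R = ray x"
    using extremal_ray_convex_cone_hullE[OF assms(1,2)] by blast
  then show "R \<in> ray ` X"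
    by blast
next
  fix R
  assume "R \<in> ray ` X"
  then obtain x where x: "x \<in> X" "R = ray x"
    by blast
  with exposed obtain h where "h \<bullet> x = 0" "\<forall>y\<in>X - {x}. 0 < h \<bullet> y"
    by blast
  then have "ray x face_of convex_cone hull X"
    using exposed_ray_face_of_convex_cone_hull[OF assms(1) x(1)] by blast
  moreover have "x \<noteq> 0"
    using assms(2) x(1) by blast
  ultimately show "R \<in> {R. extremal_ray (convex_cone hull X) R}"
    unfolding extremal_ray_def x(2) ray_def by blast
qed

lemma inj_on_ray_exposed:
  assumes exposed: "\<And>x. x \<in> X \<Longrightarrow> \<exists>h. h \<bullet> x = 0 \<and> (\<forall>y\<in>X - {x}. 0 < h \<bullet> y)"
  shows "inj_on ray X"
proof (rule inj_onI)
  fix x y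
  assume "x \<in> X" "y \<in> X" "ray x = ray y"
  then obtain t where y: "y = t *\<^sub>R x"
    using mem_ray_self[of y] by (auto simp: ray_def)
  obtain h where h: "h \<bullet> x = 0" "\<forall>z\<in>X - {x}. 0 < h \<bullet> z"
    using exposed \<open>x \<in> X\<close> by blast
  show "x = y"
  proof (rule ccontr)
    assume "x \<noteq> y"
    then have "0 < h \<bullet> y"
      using h(2) \<open>y \<in> X\<close> by blast
    moreover have "h \<bullet> y = 0"
      using h(1) by (simp add: y)
    ultimately show False
      by simp
  qed
qed

section \<open>The cone and the Hilbert basis of S\<close>

lemma emb_tadd:
  assumes "s \<in> S_set" "t \<in> S_set"
  shows "emb (tadd s t) = emb s + emb t"
  using assms by (elim S_set_lr_tripleE) (simp add: emb_def vec4_def tadd_def lr_triple_def)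

lemma emb_tzero: "emb tzero = 0"
  by (simp add: emb_def vec4_def tzero_def zero_prod_def)

lemma exposed_gens:
  assumes "g \<in> set gens"
  shows "\<exists>h. h \<bullet> emb g = 0 \<and> (\<forall>g'\<in>set gens - {g}. 0 < h \<bullet> emb g')"
proof -
  let ?normals = "[((0, 0, 0, 0), (1, 0, 0, 0), (0, 0, 1, 0)),
    ((1, 0, 0, 0), (0, 0, 0, 0), (0, 0, 1, 0)), ((0, -1, 0, 0), (0, 0, 0, 0), (1, 0, 0, 1)),
    ((0, 0, 0, 0), (0, -1, 0, 0), (1, 0, 0, 1)), ((0, 0, 0, 0), (0, 0, 0, 0), (1, -1, 1, 0)),
    ((0, 1, 0, 0), (0, 0, 0, 0), (1, 0, 0, -1)), ((0, 0, 0, 0), (0, 1, 0, 0), (1, 0, 0, -1)),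
    ((1, 0, 0, 0), (1, 0, 0, 0), (0, -1, 1, -1))]"
  have "\<forall>(g, h) \<in> set (zip gens ?normals).
      h \<bullet> emb g = 0 \<and> (\<forall>g'\<in>set gens - {g}. 0 < h \<bullet> emb g')"
    by (simp add: gens_def emb_def vec4_def insert_Diff_if)
  moreover have "g \<in> fst ` set (zip gens ?normals)"
    using assms by (simp add: gens_def)
  ultimately show ?thesis
    by fastforce
qed

lemma exposed_emb_gens:
  assumes "x \<in> emb ` set gens"
  shows "\<exists>h. h \<bullet> x = 0 \<and> (\<forall>y\<in>emb ` set gens - {x}. 0 < h \<bullet> y)"
proof -
  obtain g where g: "g \<in> set gens" "x = emb g"
    using assms by blast
  then obtain h where "h \<bullet> emb g = 0" "\<forall>g'\<in>set gens - {g}. 0 < h \<bullet> emb g'"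
    using exposed_gens by blast
  then show ?thesis
    using g by blast
qed

lemma convex_cone_hull_emb_S_set:
  "convex_cone hull (emb ` S_set) = convex_cone hull (emb ` set gens)"
proof (rule equalityI)
  have "emb ` S_set \<subseteq> convex_cone hull (emb ` set gens)"
  proof
    fix x
    assume "x \<in> emb ` S_set"
    then obtain t where "t \<in> S_set" "x = emb t"
      by blast
    then show "x \<in> convex_cone hull (emb ` set gens)"
    proof (induction arbitrary: x rule: S_set_induct)
      case zero
      then show ?case
        by (simp add: emb_tzero convex_cone_hull_contains_0)
    next
      case (tadd g t)
      then show ?case
        using emb_tadd[OF subsetD[OF gens_subset_S_set] tadd.hyps(2)]
        by (auto intro: convex_cone_hull_add hull_inc)
    qed
  qed
  then show "convex_cone hull (emb ` S_set) \<subseteq> convex_cone hull (emb ` set gens)"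
    by (rule hull_minimal) (rule convex_cone_convex_cone_hull)
  show "convex_cone hull (emb ` set gens) \<subseteq> convex_cone hull (emb ` S_set)"
    using gens_subset_S_set by (intro hull_mono image_mono)
qed

lemma inner_nonneg_emb_S_set:
  assumes "h \<bullet> emb g = 0" "\<forall>g'\<in>set gens - {g}. 0 < h \<bullet> emb g'" and "t \<in> S_set"
  shows "0 \<le> h \<bullet> emb t"
proof (rule inner_nonneg_convex_cone_hull)
  show "emb t \<in> convex_cone hull (emb ` set gens)"
    using assms(3) by (auto simp flip: convex_cone_hull_emb_S_set intro: hull_inc)
  show "0 \<le> h \<bullet> x" if "x \<in> emb ` set gens" for x
    using assms(1,2) that by (cases "x = emb g") (auto intro: less_imp_le)
qed

lemma S_set_peel_exposed_gen:
  assumes g: "g \<in> set gens" and h: "h \<bullet> emb g = 0" "\<forall>g'\<in>set gens - {g}. 0 < h \<bullet> emb g'"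
    and t: "t \<in> S_set" "t \<noteq> tzero" "h \<bullet> emb t = 0"
  shows "\<exists>t'\<in>S_set. t = tadd g t'"
proof -
  obtain g' t' where g': "g' \<in> set gens" and t': "t' \<in> S_set" and t_eq: "t = tadd g' t'"
    using S_set_decompose[OF t(1,2)] by blast
  have "h \<bullet> emb g' + h \<bullet> emb t' = 0"
    using t(3) emb_tadd[OF subsetD[OF gens_subset_S_set g'] t'] by (simp add: t_eq inner_add_right)
  moreover have "0 \<le> h \<bullet> emb t'"
    using inner_nonneg_emb_S_set[OF h t'] .
  ultimately have "\<not> 0 < h \<bullet> emb g'"
    by linarith
  then have "g' = g"
    using h(2) g' by blast
  then show ?thesis
    using t' t_eq by blast
qed

lemma hilbert_basis_S_set_subset: "hilbert_basis S_set \<subseteq> set gens"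
proof
  fix s
  assume "s \<in> hilbert_basis S_set"
  then have s: "s \<in> S_set" "s \<noteq> tzero"
    and irreducible: "\<not> (\<exists>a\<in>S_set. \<exists>b\<in>S_set. a \<noteq> tzero \<and> b \<noteq> tzero \<and> s = tadd a b)"
    unfolding hilbert_basis_def by blast+
  obtain g t where g: "g \<in> set gens" and t: "t \<in> S_set" and s_eq: "s = tadd g t"
    using S_set_decompose[OF s] by blast
  have gS: "g \<in> S_set" "g \<noteq> tzero"
    using g gens_subset_S_set tzero_notin_gens by auto
  have "t = tzero"
  proof (rule ccontr)
    assume "t \<noteq> tzero"
    then show False
      using irreducible gS t s_eq by blast
  qed
  then show "s \<in> set gens"
    using s_eq g tadd_tzero[OF gS(1)] by simp
qed

lemma gens_subset_hilbert_basis_S_set: "set gens \<subseteq> hilbert_basis S_set"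
proof
  fix g
  assume g: "g \<in> set gens"
  then obtain h where h: "h \<bullet> emb g = 0" "\<forall>g'\<in>set gens - {g}. 0 < h \<bullet> emb g'"
    using exposed_gens by blast
  have gS: "g \<in> S_set"
    using g gens_subset_S_set by blast
  have "\<not> (\<exists>a\<in>S_set. \<exists>b\<in>S_set. a \<noteq> tzero \<and> b \<noteq> tzero \<and> g = tadd a b)"
  proof
    assume "\<exists>a\<in>S_set. \<exists>b\<in>S_set. a \<noteq> tzero \<and> b \<noteq> tzero \<and> g = tadd a b"
    then obtain a b where a: "a \<in> S_set" "a \<noteq> tzero" and b: "b \<in> S_set" "b \<noteq> tzero"
      and g_eq: "g = tadd a b"
      by blast
    have "h \<bullet> emb a + h \<bullet> emb b = 0"
      using h(1) by (simp add: g_eq emb_tadd[OF a(1) b(1)] inner_add_right)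
    moreover have "0 \<le> h \<bullet> emb a" "0 \<le> h \<bullet> emb b"
      using inner_nonneg_emb_S_set[OF h] a(1) b(1) by blast+
    ultimately have "h \<bullet> emb a = 0" "h \<bullet> emb b = 0"
      by linarith+
    then obtain a' b' where a': "a' \<in> S_set" "a = tadd g a'" and b': "b' \<in> S_set" "b = tadd g b'"
      using S_set_peel_exposed_gen[OF g h] a b by metis
    have "triple_degree g = triple_degree a + triple_degree b"
      unfolding g_eq by (rule triple_degree_tadd[OF a(1) b(1)])
    also have "\<dots> = 2 * triple_degree g + triple_degree a' + triple_degree b'"
      unfolding a'(2) b'(2) triple_degree_tadd[OF gS a'(1)] triple_degree_tadd[OF gS b'(1)] by simp
    finally have "triple_degree g = 2 * triple_degree g + triple_degree a' + triple_degree b'" .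
    then show False
      using triple_degree_gens_pos[OF g] by linarith
  qed
  then show "g \<in> hilbert_basis S_set"
    using g gS tzero_notin_gens unfolding hilbert_basis_def by blast
qed

theorem proposition6p3:
  shows "{R. extremal_ray (convex_cone hull (emb ` S_set)) R} = (\<lambda>t. ray (emb t)) ` set gens
       \<and> card {R. extremal_ray (convex_cone hull (emb ` S_set)) R} = 8
       \<and> (\<forall>t \<in> set gens. case t of (lam, mu, nu) \<Rightarrow> LR_coeff lam mu nu = 1)
       \<and> hilbert_basis S_set = set gens"
proof -
  have "0 \<notin> emb ` set gens"
    by (auto simp: gens_def emb_def vec4_def zero_prod_def)
  then have rays: "{R. extremal_ray (convex_cone hull (emb ` S_set)) R} = ray ` emb ` set gens"
    unfolding convex_cone_hull_emb_S_set
    by (intro extremal_rays_convex_cone_hull_exposed exposed_emb_gens) simp_all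
  have "card (ray ` emb ` set gens) = card (emb ` set gens)"
    by (intro card_image inj_on_ray_exposed exposed_emb_gens)
  also have "\<dots> = 8"
    by (simp add: gens_def emb_def vec4_def)
  finally show ?thesis
    using rays LR_coeff_gens hilbert_basis_S_set_subset gens_subset_hilbert_basis_S_set
    by (simp add: image_image)
qed

end
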